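(* Let $1\le k\le n$, $p>q$, and let $\varphi$ be a positive smooth function on $\mathbb{S}^n$. If $u$ and $\bar u$ are two positive admissible $C^2$ solutions on $\mathbb{S}^n$ of $$\sigma_k(u_{ij}+u\delta_{ij})=u^{p-1}(u^2+|\nabla u|^2)^{\frac{k+1-q}{2}}\varphi(x),$$ then $u\equiv\bar u$.
   Context: $\mathbb{S}^n$ is the round unit sphere; $u_{ij}$ are components of the covariant Hessian in a local orthonormal frame. $\sigma_k$ is the $k$-th elementary symmetric polynomial of the eigenvalues. $\Gamma_k=\{\lambda\in\mathbb{R}^n:\sigma_i(\lambda)>0,\ 1\le i\le k\}$; a solution is admissible if the eigenvalues of $(u_{ij}+u\delta_{ij})$ lie in $\Gamma_k$ everywhere. *)

theory Defs
  imports "HOL-Analysis.Analysis"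
begin

fun Ck_on :: "nat \<Rightarrow> 'a::euclidean_space set \<Rightarrow> ('a \<Rightarrow> real) \<Rightarrow> bool" where
  "Ck_on 0 S f = continuous_on S f"
| "Ck_on (Suc m) S f = (continuous_on S f \<and> f differentiable_on S \<and>
      (\<forall>v. Ck_on m S (\<lambda>y. frechet_derivative f (at y) v)))"

definition smooth_on :: "'a::euclidean_space set \<Rightarrow> ('a \<Rightarrow> real) \<Rightarrow> bool" where
  "smooth_on S f = (\<forall>m. Ck_on m S f)"

text \<open>Zero-homogeneous extension of a function on the unit sphere to the
  punctured space.  A function on the sphere is C^m iff this extension is C^m
  on the complement of the origin.\<close>
definition hom0 :: "('a::euclidean_space \<Rightarrow> real) \<Rightarrow> 'a \<Rightarrow> real" where
  "hom0 u x = u (x /\<^sub>R norm x)"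

definition punctured :: "'a::euclidean_space set" where
  "punctured = - {0}"

text \<open>Covariant Hessian of u on the sphere applied to tangent vectors v, w at x
  (computed through the zero-homogeneous extension).\<close>
definition sph_hess :: "('a::euclidean_space \<Rightarrow> real) \<Rightarrow> 'a \<Rightarrow> 'a \<Rightarrow> 'a \<Rightarrow> real" where
  "sph_hess u x v w =
     frechet_derivative (\<lambda>y. frechet_derivative (hom0 u) (at y) v) (at x) w"

definition sph_grad_sq :: "('a::euclidean_space \<Rightarrow> real) \<Rightarrow> 'a \<Rightarrow> real" where
  "sph_grad_sq u x = (\<Sum>b\<in>Basis. (frechet_derivative (hom0 u) (at x) b)\<^sup>2)"

definition tangent_frame :: "'a::euclidean_space \<Rightarrow> (nat \<Rightarrow> 'a) \<Rightarrow> bool" where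
  "tangent_frame x e = (\<forall>i\<in>{1..DIM('a) - 1}. e i \<bullet> x = 0 \<and>
      (\<forall>j\<in>{1..DIM('a) - 1}. e i \<bullet> e j = (if i = j then 1 else 0)))"

text \<open>lam_1..lam_n are the eigenvalues of the matrix (u_ij + u delta_ij) at x:
  there is an orthonormal tangent frame diagonalising it with these diagonal entries.\<close>
definition sph_eigs :: "('a::euclidean_space \<Rightarrow> real) \<Rightarrow> 'a \<Rightarrow> (nat \<Rightarrow> real) \<Rightarrow> bool" where
  "sph_eigs u x lam = (\<exists>e. tangent_frame x e \<and>
      (\<forall>i\<in>{1..DIM('a) - 1}. \<forall>j\<in>{1..DIM('a) - 1}.
         sph_hess u x (e i) (e j) + (if i = j then u x else 0) = (if i = j then lam i else 0)))"

definition sigma :: "nat \<Rightarrow> nat \<Rightarrow> (nat \<Rightarrow> real) \<Rightarrow> real" where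
  "sigma n k lam = (\<Sum>I\<in>{I. I \<subseteq> {1..n} \<and> card I = k}. \<Prod>i\<in>I. lam i)"

definition in_Gamma :: "nat \<Rightarrow> nat \<Rightarrow> (nat \<Rightarrow> real) \<Rightarrow> bool" where
  "in_Gamma n k lam = (\<forall>i\<in>{1..k}. sigma n i lam > 0)"

definition pos_adm_solution ::
  "nat \<Rightarrow> real \<Rightarrow> real \<Rightarrow> ('a::euclidean_space \<Rightarrow> real) \<Rightarrow> ('a \<Rightarrow> real) \<Rightarrow> bool" where
  "pos_adm_solution k p q phi u =
    (Ck_on 2 punctured (hom0 u) \<and>
     (\<forall>x\<in>sphere 0 1. u x > 0 \<and>
        (\<exists>lam. sph_eigs u x lam \<and> in_Gamma (DIM('a) - 1) k lam \<and>
           sigma (DIM('a) - 1) k lam =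
             u x powr (p - 1) * (u x ^ 2 + sph_grad_sq u x) powr ((real k + 1 - q) / 2) * phi x)))"

end

theory Submission
  imports Defs
begin

text \<open>Let \<open>M\<close> be the maximum of \<open>u / ubar\<close> on the sphere, attained at \<open>x\<^sub>0\<close>, and suppose
  \<open>M > 1\<close>. The zero-homogeneous extension of \<open>u - M ubar\<close> has a maximum at \<open>x\<^sub>0\<close>, so there
  \<open>\<nabla>u = M \<nabla>ubar\<close> and the Hessian form of \<open>u\<close> is dominated by that of \<open>M ubar\<close>. By the
  min-max principle the eigenvalues \<open>\<lambda>\<close> of \<open>(u\<^sub>i\<^sub>j + u \<delta>\<^sub>i\<^sub>j)\<close> are then dominated, after a
  permutation, by \<open>M \<mu>\<close>, where \<open>\<mu>\<close> are those of \<open>(ubar\<^sub>i\<^sub>j + ubar \<delta>\<^sub>i\<^sub>j)\<close>. Since \<open>\<sigma>\<^sub>k\<close> is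
  increasing in each variable on the Garding cone \<open>\<Gamma>\<^sub>k\<close> (a consequence of Newton's
  inequalities), \<open>\<sigma>\<^sub>k(\<lambda>) \<le> M\<^sup>k \<sigma>\<^sub>k(\<mu>)\<close>. But the right-hand side of the equation is homogeneous
  of degree \<open>p + k - q\<close> in \<open>(u, \<nabla>u)\<close>, so \<open>\<sigma>\<^sub>k(\<lambda>) = M\<^bsup>p+k-q\<^esup> \<sigma>\<^sub>k(\<mu>)\<close>, contradicting \<open>p > q\<close>.
  Hence \<open>u \<le> ubar\<close>, and by symmetry \<open>u = ubar\<close>.\<close>

section \<open>Elementary symmetric functions\<close>

definition esym :: "'i set \<Rightarrow> nat \<Rightarrow> ('i \<Rightarrow> real) \<Rightarrow> real" where
  "esym S k lam = (\<Sum>I\<in>{I. I \<subseteq> S \<and> card I = k}. \<Prod>i\<in>I. lam i)"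

lemma sigma_eq_esym: "sigma n k lam = esym {1..n} k lam"
  by (simp add: sigma_def esym_def)

lemma esym_0: "finite S \<Longrightarrow> esym S 0 lam = 1"
proof -
  assume "finite S"
  then have "{I. I \<subseteq> S \<and> card I = 0} = {{}}"
    using rev_finite_subset by fastforce
  then show ?thesis by (simp add: esym_def)
qed

lemma esym_eq_0: "finite S \<Longrightarrow> card S < k \<Longrightarrow> esym S k lam = 0"
proof -
  assume "finite S" "card S < k"
  then have empty: "{I. I \<subseteq> S \<and> card I = k} = {}"
    using card_mono by (metis (mono_tags, lifting) Collect_empty_eq leD)
  show ?thesis unfolding esym_def empty by simp
qed

lemma esym_card: "finite S \<Longrightarrow> esym S (card S) lam = (\<Prod>j\<in>S. lam j)"
proof -
  assume "finite S"
  then have "{I. I \<subseteq> S \<and> card I = card S} = {S}"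
    using card_subset_eq by auto
  then show ?thesis by (simp add: esym_def)
qed

lemma esym_insert:
  assumes "finite S" "a \<notin> S"
  shows "esym (insert a S) (Suc k) lam = esym S (Suc k) lam + lam a * esym S k lam"
proof -
  let ?A = "{I. I \<subseteq> insert a S \<and> card I = Suc k}"
  let ?B = "{I. I \<subseteq> S \<and> card I = Suc k}"
  let ?C = "{I. I \<subseteq> S \<and> card I = k}"
  have split: "?A = ?B \<union> insert a ` ?C"
  proof (rule set_eqI, rule iffI)
    fix I assume "I \<in> ?A"
    then have I: "I \<subseteq> insert a S" "card I = Suc k" by auto
    show "I \<in> ?B \<union> insert a ` ?C"
    proof (cases "a \<in> I")
      case True
      then have "I = insert a (I - {a})" "I - {a} \<subseteq> S" "card (I - {a}) = k"
        using I by (auto simp: card_Diff_singleton_if)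
      then show ?thesis by blast
    next
      case False then show ?thesis using I by auto
    qed
  next
    fix I assume "I \<in> ?B \<union> insert a ` ?C"
    then show "I \<in> ?A"
      using assms finite_subset by (fastforce simp: card_insert_if)
  qed
  have disj: "?B \<inter> insert a ` ?C = {}" using assms by auto
  have finB: "finite ?B" and finC: "finite ?C"
    by (rule finite_subset[of _ "Pow S"], use assms in auto)+
  have inj: "inj_on (insert a) ?C"
    using assms by (intro inj_onI) (metis (no_types, lifting) Diff_insert_absorb mem_Collect_eq subsetD)
  have "esym (insert a S) (Suc k) lam
      = (\<Sum>I\<in>?B. \<Prod>i\<in>I. lam i) + (\<Sum>I\<in>insert a ` ?C. \<Prod>i\<in>I. lam i)"
    unfolding esym_def split using finB finC disj by (intro sum.union_disjoint) auto
  also have "(\<Sum>I\<in>insert a ` ?C. \<Prod>i\<in>I. lam i) = (\<Sum>I\<in>?C. \<Prod>i\<in>insert a I. lam i)"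
    using inj by (simp add: sum.reindex)
  also have "\<dots> = (\<Sum>I\<in>?C. lam a * (\<Prod>i\<in>I. lam i))"
  proof (rule sum.cong[OF refl])
    fix I assume "I \<in> ?C"
    then have "finite I" "a \<notin> I" using assms finite_subset by auto
    then show "(\<Prod>i\<in>insert a I. lam i) = lam a * (\<Prod>i\<in>I. lam i)" by simp
  qed
  finally show ?thesis unfolding esym_def by (simp only: sum_distrib_left)
qed

lemma esym_remove:
  assumes "finite S" "i \<in> S"
  shows "esym S (Suc j) lam = esym (S - {i}) (Suc j) lam + lam i * esym (S - {i}) j lam"
proof -
  have "S = insert i (S - {i})" using assms by auto
  then show ?thesis using esym_insert[of "S - {i}" i j lam] assms by simp
qed

lemma esym_cong: "(\<And>j. j \<in> S \<Longrightarrow> f j = g j) \<Longrightarrow> esym S k f = esym S k g"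
  unfolding esym_def by (intro sum.cong refl prod.cong) auto

lemma esym_cmult: "esym S k (\<lambda>i. c * lam i) = c ^ k * esym S k lam"
  unfolding esym_def sum_distrib_left by (intro sum.cong refl) (simp add: prod.distrib)

lemma esym_reindex:
  assumes bij: "bij_betw p S T"
  shows "esym T k mu = esym S k (\<lambda>i. mu (p i))"
proof -
  have inj: "inj_on p S" and img: "p ` S = T" using bij by (auto simp: bij_betw_def)
  let ?X = "{I. I \<subseteq> S \<and> card I = k}" and ?Y = "{J. J \<subseteq> T \<and> card J = k}"
  have injX: "inj_on (image p) ?X"
    by (rule inj_onI) (use inj_on_image_eq_iff[OF inj] in auto)
  have imX: "image p ` ?X = ?Y"
  proof
    show "image p ` ?X \<subseteq> ?Y"
      using img card_image inj_on_subset[OF inj] by fastforce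
  next
    show "?Y \<subseteq> image p ` ?X"
    proof
      fix J assume J: "J \<in> ?Y"
      define I where "I = {i\<in>S. p i \<in> J}"
      have IS: "I \<subseteq> S" and pI: "p ` I = J" using J img unfolding I_def by blast+
      have "card I = k" using card_image[OF inj_on_subset[OF inj IS]] pI J by simp
      then show "J \<in> image p ` ?X" using IS pI by blast
    qed
  qed
  have "esym T k mu = (\<Sum>J\<in>image p ` ?X. \<Prod>j\<in>J. mu j)" unfolding esym_def imX ..
  also have "\<dots> = (\<Sum>I\<in>?X. \<Prod>j\<in>p ` I. mu j)" using sum.reindex[OF injX] by simp
  also have "\<dots> = (\<Sum>I\<in>?X. \<Prod>i\<in>I. mu (p i))"
    using inj_on_subset[OF inj] by (intro sum.cong refl) (simp add: prod.reindex)
  finally show ?thesis unfolding esym_def .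
qed

lemma esym_1: "finite S \<Longrightarrow> esym S 1 x = (\<Sum>j\<in>S. x j)"
proof (induction S rule: finite_induct)
  case empty then show ?case by (simp add: esym_eq_0)
next
  case (insert a S)
  then show ?case using esym_insert[of S a 0 x] by (simp add: esym_0)
qed

lemma esym_2: "finite S \<Longrightarrow> 2 * esym S 2 x = (\<Sum>j\<in>S. x j)\<^sup>2 - (\<Sum>j\<in>S. (x j)\<^sup>2)"
proof (induction S rule: finite_induct)
  case empty then show ?case by (simp add: esym_eq_0)
next
  case (insert a S)
  have "esym (insert a S) 2 x = esym S 2 x + x a * (\<Sum>j\<in>S. x j)"
    using esym_insert[OF insert.hyps, of 1 x] esym_1[OF insert.hyps(1), of x]
    unfolding Suc_1 by simp
  then show ?case using insert by (simp add: power2_eq_square algebra_simps)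
qed

lemma esym_inverse:
  assumes fin: "finite S" and nz: "\<forall>j\<in>S. lam j \<noteq> 0" and m: "m \<le> card S"
  shows "esym S m (\<lambda>j. 1 / lam j) * (\<Prod>j\<in>S. lam j) = esym S (card S - m) lam"
proof -
  let ?X = "{I. I \<subseteq> S \<and> card I = m}" and ?Y = "{J. J \<subseteq> S \<and> card J = card S - m}"
  have "esym S m (\<lambda>j. 1 / lam j) * (\<Prod>j\<in>S. lam j) = (\<Sum>I\<in>?X. \<Prod>j\<in>S - I. lam j)"
    unfolding esym_def sum_distrib_right
  proof (rule sum.cong[OF refl])
    fix I assume "I \<in> ?X"
    then have IS: "I \<subseteq> S" by simp
    then have fI: "finite I" using fin finite_subset by blast
    have "(\<Prod>j\<in>S. lam j) = (\<Prod>j\<in>S - I. lam j) * (\<Prod>j\<in>I. lam j)"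
      using prod.subset_diff[OF IS fin] .
    moreover have "(\<Prod>j\<in>I. 1 / lam j) * (\<Prod>j\<in>I. lam j) = 1"
      using nz IS by (simp add: prod_dividef subset_iff prod_zero_iff[OF fI])
    ultimately show "(\<Prod>j\<in>I. 1 / lam j) * (\<Prod>j\<in>S. lam j) = (\<Prod>j\<in>S - I. lam j)"
      by (metis (no_types, lifting) mult.left_commute mult.right_neutral)
  qed
  also have "\<dots> = (\<Sum>J\<in>?Y. \<Prod>j\<in>J. lam j)"
  proof (rule sum.reindex_bij_witness[of _ "\<lambda>J. S - J" "\<lambda>I. S - I"])
    fix I assume "I \<in> ?X"
    then have IS: "I \<subseteq> S" "card I = m" and "finite I" using fin finite_subset by auto
    then show "S - (S - I) = I" "S - I \<in> ?Y" by (auto simp: card_Diff_subset)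
  next
    fix J assume "J \<in> ?Y"
    then have JS: "J \<subseteq> S" "card J = card S - m" and "finite J" using fin finite_subset by auto
    then show "S - (S - J) = J" "S - J \<in> ?X" using m by (auto simp: card_Diff_subset)
  qed simp
  finally show ?thesis by (simp add: esym_def)
qed

section \<open>Newton's inequalities\<close>

definition root_poly :: "'i set \<Rightarrow> ('i \<Rightarrow> real) \<Rightarrow> real poly" where
  "root_poly S lam = (\<Prod>j\<in>S. [:lam j, 1:])"

lemma poly_root_poly: "finite S \<Longrightarrow> poly (root_poly S lam) x = (\<Prod>j\<in>S. x + lam j)"
  by (simp add: root_poly_def poly_prod add.commute)

lemma coeff_root_poly:
  assumes "finite S"
  shows "coeff (root_poly S lam) i = (if i \<le> card S then esym S (card S - i) lam else 0)"
  using assms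
proof (induction S arbitrary: i rule: finite_induct)
  case empty
  then show ?case by (simp add: root_poly_def esym_0 coeff_1)
next
  case (insert a S)
  let ?N = "card S"
  have "root_poly (insert a S) lam = smult (lam a) (root_poly S lam) + pCons 0 (root_poly S lam)"
    using insert by (simp add: root_poly_def mult_pCons_left)
  then have coeff_insert: "coeff (root_poly (insert a S) lam) i
      = lam a * coeff (root_poly S lam) i + (case i of 0 \<Rightarrow> 0 | Suc j \<Rightarrow> coeff (root_poly S lam) j)"
    by (simp add: coeff_pCons split: nat.split)
  have card_insert: "card (insert a S) = Suc ?N" using insert by simp
  show ?case
  proof (cases i)
    case 0
    then show ?thesis
      using coeff_insert card_insert insert esym_insert[OF insert.hyps, of ?N lam]
      by (simp add: esym_eq_0)
  next
    case (Suc j)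
    consider "Suc j \<le> ?N" | "j = ?N" | "?N < j" by linarith
    then show ?thesis
    proof cases
      case 1
      then have "?N - j = Suc (?N - Suc j)" by simp
      then show ?thesis
        using 1 Suc coeff_insert card_insert insert esym_insert[OF insert.hyps, of "?N - Suc j" lam]
        by simp
    qed (use Suc coeff_insert card_insert insert in \<open>simp_all add: esym_0\<close>)
  qed
qed

lemma pderiv_roots_between:
  fixes P :: "real poly"
  assumes fin: "finite R" and card_R: "card R = n" and root: "\<And>x. x \<in> R \<Longrightarrow> poly P x = 0"
  shows "\<exists>z. inj_on z {..<n-1} \<and> (\<forall>i<n-1. poly (pderiv P) (z i) = 0)"
proof -
  define xs where "xs = sorted_list_of_set R"
  have len: "length xs = n" and set_xs: "set xs = R"
    unfolding xs_def using card_R fin by simp_all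
  have sorted: "sorted_wrt (<) xs" unfolding xs_def by (rule strict_sorted_list_of_set)
  have lt: "xs ! i < xs ! j" if "i < j" "j < n" for i j
    using sorted_wrt_nth_less[OF sorted that(1)] that len by simp
  have root_xs: "poly P (xs ! i) = 0" if "i < n" for i
    using root nth_mem that len set_xs by metis
  have cont: "continuous_on A (poly P)" for A
    by (rule continuous_at_imp_continuous_on) (auto intro: DERIV_isCont[OF poly_DERIV])
  have "\<exists>z. xs ! i < z \<and> z < xs ! Suc i \<and> poly (pderiv P) z = 0" if "i < n - 1" for i
  proof -
    have "xs ! i < xs ! Suc i" "poly P (xs ! i) = poly P (xs ! Suc i)"
      using lt root_xs that by simp_all
    from Rolle_deriv[OF this cont has_field_derivative_imp_has_derivative[OF poly_DERIV]]
    obtain z where "xs ! i < z" "z < xs ! Suc i" "(*) (poly (pderiv P) z) = (\<lambda>v. 0)"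
      by blast
    then show ?thesis by (metis mult_1_right)
  qed
  then obtain z where z: "\<And>i. i < n - 1 \<Longrightarrow> xs ! i < z i \<and> z i < xs ! Suc i \<and> poly (pderiv P) (z i) = 0"
    by metis
  have "z i < z j" if "i < j" "j < n - 1" for i j
  proof -
    have "z i < xs ! Suc i" using z that by simp
    also have "xs ! Suc i \<le> xs ! j"
    proof (cases "Suc i = j")
      case False
      with that show ?thesis by (intro less_imp_le lt) auto
    qed simp
    also have "xs ! j < z j" using z that by simp
    finally show ?thesis .
  qed
  then have "inj_on z {..<n-1}"
    by (intro inj_onI) (metis lessThan_iff less_irrefl nat_neq_iff)
  with z show ?thesis by blast
qed

lemma pderiv_root_poly:
  assumes fin: "finite S" and card_S: "card S = n" and n2: "2 \<le> n" and inj: "inj_on lam S"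
  shows "\<exists>rho. inj_on rho {..<n-1} \<and>
           pderiv (root_poly S lam) = smult (real n) (root_poly {..<n-1} rho)"
proof -
  define P where "P = root_poly S lam"
  have inj_neg: "inj_on (\<lambda>j. - lam j) S" using inj unfolding inj_on_def by auto
  have "\<exists>z. inj_on z {..<n-1} \<and> (\<forall>i<n-1. poly (pderiv P) (z i) = 0)"
  proof (rule pderiv_roots_between)
    show "card ((\<lambda>j. - lam j) ` S) = n" using card_image[OF inj_neg] card_S by simp
    show "poly P x = 0" if "x \<in> (\<lambda>j. - lam j) ` S" for x
      using that fin by (auto simp: P_def poly_root_poly prod_zero_iff)
  qed (use fin in simp)
  then obtain z where inj_z: "inj_on z {..<n-1}"
    and z: "\<And>i. i < n - 1 \<Longrightarrow> poly (pderiv P) (z i) = 0" by blast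
  define rho where "rho = (\<lambda>i. - z i)"
  have inj_rho: "inj_on rho {..<n-1}" using inj_z unfolding rho_def inj_on_def by auto
  define Q where "Q = smult (real n) (root_poly {..<n-1} rho)"
  define D where "D = pderiv P - Q"
  have coeff_P: "coeff (pderiv P) i = real (Suc i) * (if Suc i \<le> n then esym S (n - Suc i) lam else 0)"
    for i unfolding P_def by (simp add: coeff_pderiv coeff_root_poly[OF fin] card_S)
  have coeff_Q: "coeff Q i = real n * (if i \<le> n - 1 then esym {..<n-1} (n - 1 - i) rho else 0)" for i
    unfolding Q_def by (simp add: coeff_root_poly)
  text \<open>Both are of degree \<open>n - 1\<close> with leading coefficient \<open>n\<close>, and they share \<open>n - 1\<close> roots.\<close>
  have "coeff D i = 0" if "i > n - 2" for i
    using that n2 fin unfolding D_def coeff_diff coeff_P coeff_Q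
    by (cases "i = n - 1") (auto simp: esym_0 Suc_diff_Suc)
  then have deg_D: "degree D \<le> n - 2" by (intro degree_le) auto
  have "D = 0"
  proof (rule ccontr)
    assume "D \<noteq> 0"
    have roots: "z ` {..<n-1} \<subseteq> {x. poly D x = 0}"
      using z by (auto simp: D_def Q_def poly_root_poly prod_zero_iff rho_def)
    have "n - 1 = card (z ` {..<n-1})" using card_image[OF inj_z] by simp
    also have "\<dots> \<le> card {x. poly D x = 0}"
      by (rule card_mono[OF poly_roots_finite[OF \<open>D \<noteq> 0\<close>] roots])
    also have "\<dots> \<le> degree D" by (rule card_poly_roots_bound[OF \<open>D \<noteq> 0\<close>])
    finally show False using deg_D n2 by simp
  qed
  then show ?thesis using inj_rho unfolding D_def Q_def P_def by auto
qed

definition esym_mean :: "'i set \<Rightarrow> nat \<Rightarrow> ('i \<Rightarrow> real) \<Rightarrow> real" where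
  "esym_mean S k lam = esym S k lam / real (card S choose k)"

lemma esym_mean_eq_0: "finite S \<Longrightarrow> card S < k \<Longrightarrow> esym_mean S k lam = 0"
  by (simp add: esym_mean_def esym_eq_0)

lemma esym_mean_pderiv_roots:
  assumes fin: "finite S" and card_S: "card S = n" and n2: "2 \<le> n" and inj: "inj_on lam S"
  shows "\<exists>rho. inj_on rho {..<n-1} \<and>
           (\<forall>m \<le> n-1. esym_mean {..<n-1} m rho = esym_mean S m lam)"
proof -
  obtain rho where inj_rho: "inj_on rho {..<n-1}"
    and D: "pderiv (root_poly S lam) = smult (real n) (root_poly {..<n-1} rho)"
    using pderiv_root_poly[OF assms] by blast
  have "esym_mean {..<n-1} m rho = esym_mean S m lam" if m: "m \<le> n - 1" for m
  proof -
    define i where "i = n - 1 - m"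
    have i: "Suc i = n - m" "n - (n - m) = m" "i \<le> n - 1" "n - 1 - i = m"
      using m n2 unfolding i_def by auto
    have "real (Suc i) * coeff (root_poly S lam) (Suc i) = real n * coeff (root_poly {..<n-1} rho) i"
      using arg_cong[OF D, of "\<lambda>P. coeff P i"] by (simp add: coeff_pderiv)
    then have "real (n - m) * esym S m lam = real n * esym {..<n-1} m rho"
      unfolding coeff_root_poly[OF fin] coeff_root_poly[OF finite_lessThan] card_S card_lessThan i
      using i(3) by simp
    then have "esym {..<n-1} m rho = real (n - m) * esym S m lam / real n"
      using n2 by (simp add: field_simps)
    moreover have "real (n - 1 choose m) = real (n - m) * real (n choose m) / real n"
      using binomial_absorb_comp[of n m] n2 by (simp add: field_simps flip: of_nat_mult)
    moreover have "real (n - m) > 0" "real (n choose m) > 0" using m n2 by auto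
    ultimately show ?thesis
      unfolding esym_mean_def card_S card_lessThan using n2 by simp
  qed
  with inj_rho show ?thesis by blast
qed

lemma esym_mean_2_le_square: "finite S \<Longrightarrow> esym_mean S 2 x \<le> (esym_mean S 1 x)\<^sup>2"
proof -
  assume fin: "finite S"
  define n where "n = card S"
  show ?thesis
  proof (cases "n < 2")
    case True
    then have choose0: "real (card S choose 2) = 0" by (simp add: n_def)
    show ?thesis unfolding esym_mean_def choose0 by simp
  next
    case False
    then have n2: "real n \<ge> 2" by simp
    have choose2: "2 * real (n choose 2) = real n * (real n - 1)"
    proof -
      have "2 * (n choose 2) = n * (n - 1)"
        using times_binomial_minus1_eq[of 2 n] by simp
      then have "real (2 * (n choose 2)) = real (n * (n - 1))" by metis
      then show ?thesis using False by (simp add: of_nat_diff)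
    qed
    let ?s1 = "\<Sum>j\<in>S. x j" and ?s2 = "\<Sum>j\<in>S. (x j)\<^sup>2"
    have "?s1\<^sup>2 \<le> ?s2 * real n"
      unfolding n_def by (rule sum_squared_le_sum_of_squares)
    then have cauchy: "?s1\<^sup>2 / real n \<le> ?s2"
      using n2 by (simp add: divide_le_eq)
    have E2: "esym_mean S 2 x = (?s1\<^sup>2 - ?s2) / (real n * (real n - 1))"
    proof -
      have "esym_mean S 2 x = (2 * esym S 2 x) / (2 * real (n choose 2))"
        by (simp add: esym_mean_def n_def)
      then show ?thesis using esym_2[OF fin, of x] choose2 by simp
    qed
    have E1: "esym_mean S 1 x = ?s1 / real n"
      unfolding esym_mean_def using esym_1[OF fin] n_def by simp
    have "(?s1\<^sup>2 - ?s2) / (real n * (real n - 1)) \<le> (?s1\<^sup>2 - ?s1\<^sup>2 / real n) / (real n * (real n - 1))"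
      using cauchy n2 by (intro divide_right_mono) auto
    also have "\<dots> = (?s1 / real n)\<^sup>2"
      using n2 by (simp add: field_simps power2_eq_square)
    finally show ?thesis using E1 E2 by simp
  qed
qed

text \<open>The case \<open>k = n - 1\<close> is the case \<open>k = 1\<close> applied to the reciprocals \<open>1 / \<lambda>\<^sub>j\<close>.\<close>

lemma newton_inequality_top:
  assumes fin: "finite S" and card_S: "card S = n" and n2: "2 \<le> n"
  shows "esym_mean S (n - 2) lam * esym_mean S n lam \<le> (esym_mean S (n - 1) lam)\<^sup>2"
proof (cases "\<exists>j\<in>S. lam j = 0")
  case True
  then have "esym_mean S n lam = 0"
    using esym_card[OF fin] card_S fin by (simp add: esym_mean_def prod_zero_iff)
  then show ?thesis by simp
next
  case False
  define p where "p = (\<Prod>j\<in>S. lam j)"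
  have p0: "p \<noteq> 0" using False fin by (simp add: p_def prod_zero_iff)
  have recip: "esym_mean S m (\<lambda>j. 1 / lam j) = esym_mean S (n - m) lam / p" if "m \<le> n" for m
    using esym_inverse[OF fin _ that[folded card_S]] False p0 card_S that
    by (simp add: esym_mean_def p_def binomial_symmetric[OF that] field_simps)
  have "esym_mean S (n - 2) lam / p \<le> (esym_mean S (n - 1) lam / p)\<^sup>2"
    using esym_mean_2_le_square[OF fin, of "\<lambda>j. 1 / lam j"] recip[of 1] recip[of 2] n2
    by simp
  then have "esym_mean S (n - 2) lam * p \<le> (esym_mean S (n - 1) lam)\<^sup>2"
    using p0 by (simp add: field_simps power2_eq_square divide_le_eq split: if_splits)
  moreover have "esym_mean S n lam = p"
    using esym_card[OF fin, of lam] card_S by (simp add: esym_mean_def p_def)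
  ultimately show ?thesis by simp
qed

text \<open>For distinct values, passing to the roots of the derivative keeps the means
  \<open>esym_mean m\<close> with \<open>m < n\<close>, which reduces everything to \<open>k = n - 1\<close>.\<close>

lemma newton_inequality_inj:
  fixes S :: "nat set"
  shows "finite S \<Longrightarrow> card S = n \<Longrightarrow> inj_on lam S \<Longrightarrow> 1 \<le> k \<Longrightarrow>
   esym_mean S (k - 1) lam * esym_mean S (Suc k) lam \<le> (esym_mean S k lam)\<^sup>2"
proof (induction n arbitrary: S lam k rule: less_induct)
  case (less n)
  note fin = less.prems(1) and card_S = less.prems(2) and inj = less.prems(3) and k1 = less.prems(4)
  consider "n < Suc k" | "Suc k = n" | "Suc k < n" by linarith
  then show ?case
  proof cases
    case 1
    then show ?thesis using esym_mean_eq_0[OF fin] card_S by simp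
  next
    case 2
    then have "n - 2 = k - 1" "n - 1 = k" "2 \<le> n" using k1 by auto
    then show ?thesis using newton_inequality_top[OF fin card_S, of lam] 2 by simp
  next
    case 3
    obtain rho where inj_rho: "inj_on rho {..<n-1}"
      and mean: "\<And>m. m \<le> n - 1 \<Longrightarrow> esym_mean {..<n-1} m rho = esym_mean S m lam"
      using esym_mean_pderiv_roots[OF fin card_S _ inj] 3 by auto
    have "esym_mean {..<n-1} (k - 1) rho * esym_mean {..<n-1} (Suc k) rho
        \<le> (esym_mean {..<n-1} k rho)\<^sup>2"
      using less.IH[of "n - 1" "{..<n-1}" rho k] inj_rho k1 3 by simp
    then show ?thesis using mean 3 by simp
  qed
qed

text \<open>The general case follows by perturbing \<open>lam\<close> to \<open>lam j + e j\<close>, which is injective for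
  all but finitely many \<open>e\<close>, and using continuity.\<close>

lemma newton_inequality:
  fixes S :: "nat set"
  assumes fin: "finite S" and k1: "1 \<le> k"
  shows "esym_mean S (k - 1) lam * esym_mean S (Suc k) lam \<le> (esym_mean S k lam)\<^sup>2"
proof (rule ccontr)
  assume neg: "\<not> ?thesis"
  define L where "L = (\<lambda>(e::real) j. lam j + e * real j)"
  define F where "F = (\<lambda>e. (esym_mean S k (L e))\<^sup>2 - esym_mean S (k - 1) (L e) * esym_mean S (Suc k) (L e))"
  have "F 0 < 0" using neg unfolding F_def L_def by simp
  moreover have "continuous_on UNIV F"
    unfolding F_def esym_mean_def esym_def L_def divide_inverse by (intro continuous_intros)
  then have "open {e. F e < 0}"
    by (simp add: open_Collect_less continuous_on_const)
  ultimately obtain d where d: "d > 0" "ball 0 d \<subseteq> {e. F e < 0}"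
    using open_contains_ball_eq by blast
  define B where "B = (\<lambda>(i, j). (lam j - lam i) / (real i - real j)) ` (S \<times> S)"
  have "infinite ({0<..<d} - B)"
    using fin by (intro Diff_infinite_finite infinite_Ioo d(1)) (simp add: B_def)
  then obtain e where e: "e \<in> {0<..<d}" "e \<notin> B"
    by (metis Diff_iff finite.emptyI ex_in_conv)
  have "inj_on (L e) S"
  proof (rule inj_onI, rule ccontr)
    fix i j assume ij: "i \<in> S" "j \<in> S" "L e i = L e j" "i \<noteq> j"
    then have "e = (lam j - lam i) / (real i - real j)"
      by (simp add: L_def field_simps)
    then show False using e ij unfolding B_def by force
  qed
  then have "F e \<ge> 0" using newton_inequality_inj[OF fin refl _ k1] unfolding F_def by simp
  moreover have "e \<in> ball 0 d" using e by (simp add: dist_norm)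
  ultimately show False using d by auto
qed

section \<open>Monotonicity of \<open>\<sigma>\<^sub>k\<close> on the Garding cone\<close>

definition garding_cone :: "'i set \<Rightarrow> nat \<Rightarrow> ('i \<Rightarrow> real) \<Rightarrow> bool" where
  "garding_cone S k lam = (\<forall>j\<in>{1..k}. 0 < esym S j lam)"

lemma in_Gamma_iff_garding_cone: "in_Gamma n k lam = garding_cone {1..n} k lam"
  by (simp add: in_Gamma_def garding_cone_def sigma_eq_esym)

lemma binomial_log_concave:
  assumes "1 \<le> j"
  shows "real (m choose (j - 1)) * real (m choose Suc j) \<le> (real (m choose j))\<^sup>2"
proof (cases "j \<le> m")
  case False
  then show ?thesis by (simp add: binomial_eq_0)
next
  case True
  obtain i where ij: "j = Suc i" using assms by (cases j) auto
  have absorb: "real (Suc l) * real (m choose Suc l) = real (m - l) * real (m choose l)" for l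
    using binomial_absorption[of l m] binomial_absorb_comp[of m l] by (metis of_nat_mult)
  let ?a = "real (m choose i)" and ?b = "real (m choose Suc i)" and ?c = "real (m choose Suc (Suc i))"
  have "(real (Suc i) * real (Suc (Suc i))) * (?a * ?c) = (real (Suc i) * ?a) * (real (Suc (Suc i)) * ?c)"
    by (simp only: mult_ac)
  also have "\<dots> = (real (Suc i) * ?a) * (real (m - Suc i) * ?b)"
    by (simp only: absorb)
  also have "\<dots> \<le> (real (Suc (Suc i)) * ?b) * (real (m - i) * ?a)"
  proof -
    have "real (Suc i) * real (m - Suc i) \<le> real (Suc (Suc i)) * real (m - i)"
      using True ij by (simp add: of_nat_diff algebra_simps)
    then have "(real (Suc i) * real (m - Suc i)) * (?a * ?b) \<le> (real (Suc (Suc i)) * real (m - i)) * (?a * ?b)"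
      by (rule mult_right_mono) simp
    then show ?thesis by (simp add: algebra_simps)
  qed
  also have "\<dots> = (real (Suc (Suc i)) * ?b) * (real (Suc i) * ?b)"
    by (simp only: absorb)
  also have "\<dots> = (real (Suc i) * real (Suc (Suc i))) * ?b\<^sup>2"
    by (simp only: mult_ac power2_eq_square)
  finally show ?thesis using ij by (simp add: mult_le_cancel_left_pos)
qed

text \<open>With \<open>a, b, c\<close> the values of \<open>\<sigma>\<^sub>k, \<sigma>\<^sub>k\<^sub>+\<^sub>1, \<sigma>\<^sub>k\<^sub>+\<^sub>2\<close> on \<open>N\<close> and \<open>t = \<lambda>\<^sub>i\<close>, the conditions
  \<open>a > 0 \<ge> b\<close>, \<open>b + t a > 0\<close> and \<open>c + t b > 0\<close> force \<open>a c > b\<^sup>2\<close>, which Newton's inequality forbids.\<close>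

lemma esym_insert_Suc_Suc_nonpos:
  fixes N :: "nat set"
  assumes fin: "finite N" and i: "i \<notin> N" and a: "0 < esym N k lam" and b: "esym N (Suc k) lam \<le> 0"
    and pos: "0 < esym (insert i N) (Suc k) lam"
  shows "esym (insert i N) (Suc (Suc k)) lam \<le> 0"
proof (rule ccontr)
  define a b c t where "a = esym N k lam" and "b = esym N (Suc k) lam"
    and "c = esym N (Suc (Suc k)) lam" and "t = lam i"
  assume "\<not> ?thesis"
  then have h2: "c + t * b > 0" and h1: "b + t * a > 0"
    using pos esym_insert[OF fin i, of k lam] esym_insert[OF fin i, of "Suc k" lam]
    unfolding a_def b_def c_def t_def by (simp_all add: mult.commute)
  have "0 < a" "b \<le> 0" using a b unfolding a_def b_def .
  have "b * b = (- b) * (- b)" by simp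
  also have "\<dots> \<le> (t * a) * (- b)" using h1 \<open>b \<le> 0\<close> by (intro mult_right_mono) auto
  also have "\<dots> = (- t * b) * a" by simp
  also have "\<dots> < c * a" using h2 \<open>0 < a\<close> by (intro mult_strict_right_mono) auto
  finally have ac: "b\<^sup>2 < a * c" by (simp add: power2_eq_square mult.commute)
  then have "0 < c" using \<open>0 < a\<close> by (metis le_less_trans zero_le_power2 zero_less_mult_pos)
  define m where "m = card N"
  have "Suc (Suc k) \<le> m"
    using esym_eq_0[OF fin, of "Suc (Suc k)" lam] \<open>0 < c\<close> unfolding c_def m_def by fastforce
  then have binom_pos: "real (m choose k) > 0" "real (m choose Suc k) > 0" "real (m choose Suc (Suc k)) > 0"
    by auto
  have "(a / real (m choose k)) * (c / real (m choose Suc (Suc k))) \<le> (b / real (m choose Suc k))\<^sup>2"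
    using newton_inequality[OF fin, of "Suc k" lam]
    unfolding esym_mean_def a_def b_def c_def m_def by simp
  then have "a * c * (real (m choose Suc k))\<^sup>2 \<le> b\<^sup>2 * (real (m choose k) * real (m choose Suc (Suc k)))"
    using binom_pos by (simp add: field_simps power2_eq_square)
  also have "\<dots> \<le> b\<^sup>2 * (real (m choose Suc k))\<^sup>2"
    using binomial_log_concave[of "Suc k" m] by (intro mult_left_mono) auto
  finally show False using ac binom_pos by simp
qed

lemma esym_remove_pos:
  fixes S :: "nat set"
  shows "finite S \<Longrightarrow> garding_cone S k lam \<Longrightarrow> i \<in> S \<Longrightarrow> j < k \<Longrightarrow> 0 < esym (S - {i}) j lam"
proof (induction k arbitrary: j)
  case 0 then show ?case by simp
next
  case (Suc k)
  note fin = Suc.prems(1) and G = Suc.prems(2) and iS = Suc.prems(3)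
  have IH: "0 < esym (S - {i}) j lam" if "j < k" for j
    using Suc.IH[OF fin _ iS that] G unfolding garding_cone_def by auto
  show ?case
  proof (cases "j < k")
    case True then show ?thesis using IH by simp
  next
    case False
    then have jk: "j = k" using Suc.prems(4) by simp
    show ?thesis
    proof (cases k)
      case 0 then show ?thesis using jk fin by (simp add: esym_0)
    next
      case (Suc k')
      have pos: "0 < esym S (Suc k') lam" "0 < esym S (Suc (Suc k')) lam"
        using G Suc unfolding garding_cone_def by auto
      show ?thesis
      proof (rule ccontr)
        assume "\<not> ?thesis"
        then have "esym S (Suc (Suc k')) lam \<le> 0"
          using esym_insert_Suc_Suc_nonpos[of "S - {i}" i k' lam] IH[of k'] pos fin iS jk Suc
          by (simp add: insert_absorb)
        then show False using pos by simp
      qed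
    qed
  qed
qed

text \<open>\<open>\<partial>\<sigma>\<^sub>j / \<partial>\<lambda>\<^sub>i = \<sigma>\<^sub>j\<^sub>-\<^sub>1(\<lambda> | i) > 0\<close> on \<open>\<Gamma>\<^sub>k\<close>, for \<open>j \<le> k\<close>.\<close>

lemma esym_increase_coordinate:
  fixes S :: "nat set"
  assumes fin: "finite S" and iS: "i \<in> S" and G: "garding_cone S k lam" and t: "t \<ge> 0"
  shows "\<forall>j\<in>{1..k}. esym S j lam \<le> esym S j (lam(i := lam i + t))"
proof
  fix j assume j: "j \<in> {1..k}"
  then obtain j' where j': "j = Suc j'" by (cases j) auto
  let ?l = "lam(i := lam i + t)"
  have same: "esym (S - {i}) m ?l = esym (S - {i}) m lam" for m by (rule esym_cong) auto
  have pos: "0 < esym (S - {i}) j' lam" using esym_remove_pos[OF fin G iS, of j'] j j' by simp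
  have "esym S j ?l = esym S j lam + t * esym (S - {i}) j' lam"
    unfolding j' esym_remove[OF fin iS] same by (simp add: algebra_simps)
  then show "esym S j lam \<le> esym S j ?l" using pos t by simp
qed

lemma garding_cone_increase:
  fixes S :: "nat set"
  assumes fin: "finite S" and G: "garding_cone S k lam"
  shows "finite F \<Longrightarrow> \<forall>i\<in>S. lam i \<le> mu i \<Longrightarrow> \<forall>i\<in>S - F. mu i = lam i \<Longrightarrow>
    garding_cone S k mu \<and> (\<forall>j\<in>{1..k}. esym S j lam \<le> esym S j mu)"
proof (induction F arbitrary: mu rule: finite_induct)
  case empty
  have "esym S j mu = esym S j lam" for j using empty by (intro esym_cong) auto
  then show ?case using G unfolding garding_cone_def by simp
next
  case (insert a F)
  define mu' where "mu' = mu(a := lam a)"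
  have "\<forall>i\<in>S - F. mu' i = lam i" "\<forall>i\<in>S. lam i \<le> mu' i"
    using insert.prems unfolding mu'_def by auto
  then have IH: "garding_cone S k mu'" "\<forall>j\<in>{1..k}. esym S j lam \<le> esym S j mu'"
    using insert.IH by blast+
  have step: "\<forall>j\<in>{1..k}. esym S j mu' \<le> esym S j mu"
  proof (cases "a \<in> S")
    case False
    then show ?thesis by (auto simp: mu'_def intro!: eq_refl esym_cong)
  next
    case True
    have "mu = mu'(a := mu' a + (mu a - lam a))" unfolding mu'_def by auto
    then show ?thesis
      using esym_increase_coordinate[OF fin True IH(1), of "mu a - lam a"] insert.prems True
      by auto
  qed
  show ?case
    using IH step unfolding garding_cone_def by (meson less_le_trans order_trans)
qed

lemma esym_mono_garding_cone:
  fixes S :: "nat set"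
  assumes "finite S" "garding_cone S k lam" "\<forall>i\<in>S. lam i \<le> mu i" "1 \<le> k"
  shows "esym S k lam \<le> esym S k mu"
  using garding_cone_increase[OF assms(1,2), of S mu] assms by simp

section \<open>Comparison of eigenvalues of quadratic forms\<close>

lemma tangent_frameD:
  assumes "tangent_frame x e" "i \<in> {1..DIM('a) - 1}" "j \<in> {1..DIM('a) - 1}"
  shows "e i \<bullet> (x::'a::euclidean_space) = 0" "e i \<bullet> e j = (if i = j then 1 else 0)"
  using assms unfolding tangent_frame_def by auto

lemma inj_on_tangent_frame:
  assumes "tangent_frame (x::'a::euclidean_space) e"
  shows "inj_on e {1..DIM('a) - 1}"
  using tangent_frameD(2)[OF assms] by (intro inj_onI) (metis one_neq_zero)

lemma inner_frame_sum:
  assumes tf: "tangent_frame (x::'a::euclidean_space) e" and I: "I \<subseteq> {1..DIM('a) - 1}" and j: "j \<in> I"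
  shows "(\<Sum>i\<in>I. c i *\<^sub>R e i) \<bullet> e j = c j"
proof -
  have "(\<Sum>i\<in>I. c i *\<^sub>R e i) \<bullet> e j = (\<Sum>i\<in>I. if i = j then c i else 0)"
    unfolding inner_sum_left
  proof (rule sum.cong[OF refl])
    fix i assume "i \<in> I"
    then have "i \<in> {1..DIM('a) - 1}" "j \<in> {1..DIM('a) - 1}" using I j by auto
    from tangent_frameD(2)[OF tf this] show "c i *\<^sub>R e i \<bullet> e j = (if i = j then c i else 0)" by simp
  qed
  also have "\<dots> = c j" using finite_subset[OF I] j by simp
  finally show ?thesis .
qed

lemma inner_self_frame_sum:
  assumes tf: "tangent_frame (x::'a::euclidean_space) e" and I: "I \<subseteq> {1..DIM('a) - 1}"
  shows "(\<Sum>i\<in>I. c i *\<^sub>R e i) \<bullet> (\<Sum>i\<in>I. c i *\<^sub>R e i) = (\<Sum>i\<in>I. (c i)\<^sup>2)"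
  unfolding inner_sum_right[of _ "\<lambda>i. c i *\<^sub>R e i"]
  by (intro sum.cong refl) (simp add: inner_frame_sum[OF tf I] power2_eq_square)

lemma inner_frame_sum_normal:
  assumes tf: "tangent_frame (x::'a::euclidean_space) e" and I: "I \<subseteq> {1..DIM('a) - 1}"
  shows "(\<Sum>i\<in>I. c i *\<^sub>R e i) \<bullet> x = 0"
  using tangent_frameD(1)[OF tf] I by (auto simp: inner_sum_left intro!: sum.neutral)

lemma bilinear_frame_sum:
  fixes A :: "'a::euclidean_space \<Rightarrow> 'a \<Rightarrow> real"
  assumes A: "bilinear A" and I: "I \<subseteq> {1..DIM('a) - 1}"
    and diag: "\<And>i j. i \<in> {1..DIM('a) - 1} \<Longrightarrow> j \<in> {1..DIM('a) - 1} \<Longrightarrow>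
      A (e i) (e j) = (if i = j then lam i else 0)"
  shows "A (\<Sum>i\<in>I. c i *\<^sub>R e i) (\<Sum>i\<in>I. c i *\<^sub>R e i) = (\<Sum>i\<in>I. (c i)\<^sup>2 * lam i)"
proof -
  let ?v = "\<Sum>i\<in>I. c i *\<^sub>R e i"
  have l1: "linear (\<lambda>v. A v w)" and l2: "linear (A v)" for v w
    using A unfolding bilinear_def by auto
  have "A ?v ?v = (\<Sum>i\<in>I. c i * A (e i) ?v)"
    using linear_sum[OF l1[of ?v], of "\<lambda>i. c i *\<^sub>R e i" I] linear_scale[OF l1[of ?v]] by simp
  also have "\<dots> = (\<Sum>i\<in>I. c i * (\<Sum>j\<in>I. c j * A (e i) (e j)))"
  proof (rule sum.cong[OF refl])
    fix i assume "i \<in> I"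
    show "c i * A (e i) ?v = c i * (\<Sum>j\<in>I. c j * A (e i) (e j))"
      using linear_sum[OF l2[of "e i"], of "\<lambda>i. c i *\<^sub>R e i" I] linear_scale[OF l2[of "e i"]] by simp
  qed
  also have "\<dots> = (\<Sum>i\<in>I. c i * (\<Sum>j\<in>I. if j = i then c i * lam i else 0))"
  proof (intro sum.cong refl arg_cong[where f = "(*) _"])
    fix i j assume "i \<in> I" "j \<in> I"
    then have "i \<in> {1..DIM('a) - 1}" "j \<in> {1..DIM('a) - 1}" using I by auto
    from diag[OF this] show "c j * A (e i) (e j) = (if j = i then c i * lam i else 0)" by auto
  qed
  also have "\<dots> = (\<Sum>i\<in>I. (c i)\<^sup>2 * lam i)"
    using finite_subset[OF I] by (simp add: power2_eq_square mult.assoc)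
  finally show ?thesis .
qed

lemma independent_tangent_frame:
  assumes tf: "tangent_frame (x::'a::euclidean_space) e" and I: "I \<subseteq> {1..DIM('a) - 1}"
  shows "independent (e ` I)"
proof (rule pairwise_orthogonal_independent)
  have "e i \<bullet> e j = 0" if "i \<in> I" "j \<in> I" "e i \<noteq> e j" for i j
  proof -
    have "i \<in> {1..DIM('a) - 1}" "j \<in> {1..DIM('a) - 1}" using that I by auto
    from tangent_frameD(2)[OF tf this] show ?thesis using that by auto
  qed
  then show "pairwise orthogonal (e ` I)"
    unfolding pairwise_def orthogonal_def by blast
  show "0 \<notin> e ` I"
    using tangent_frameD(2)[OF tf] I by fastforce
qed

lemma span_frame_expansion:
  assumes tf: "tangent_frame (x::'a::euclidean_space) e" and I: "I \<subseteq> {1..DIM('a) - 1}"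
    and v: "v \<in> span (e ` I)"
  shows "v = (\<Sum>i\<in>I. (v \<bullet> e i) *\<^sub>R e i)"
proof -
  have inj: "inj_on e I" using inj_on_tangent_frame[OF tf] I inj_on_subset by blast
  obtain u where "v = (\<Sum>w\<in>e ` I. u w *\<^sub>R w)"
    using v span_finite[of "e ` I"] finite_subset[OF I] by auto
  then have vu: "v = (\<Sum>i\<in>I. u (e i) *\<^sub>R e i)" using sum.reindex[OF inj] by simp
  then have "v \<bullet> e j = u (e j)" if "j \<in> I" for j using inner_frame_sum[OF tf I that] by simp
  then show ?thesis using vu by (metis (no_types, lifting) sum.cong)
qed

lemma tangent_frame_expansion:
  assumes x: "norm (x::'a::euclidean_space) = 1" and tf: "tangent_frame x f" and v: "v \<bullet> x = 0"
  shows "v = (\<Sum>j\<in>{1..DIM('a) - 1}. (v \<bullet> f j) *\<^sub>R f j)"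
proof -
  let ?N = "{1..DIM('a) - 1}"
  define B where "B = insert x (f ` ?N)"
  have xx: "x \<bullet> x = 1" using x by (simp add: norm_eq_1)
  have "x \<notin> f ` ?N" using tangent_frameD(1)[OF tf] xx by (auto simp: inner_commute)
  then have "card B = DIM('a)"
    using card_image[OF inj_on_tangent_frame[OF tf]] DIM_positive[where 'a='a]
    unfolding B_def by simp
  moreover have "independent B"
  proof (rule pairwise_orthogonal_independent)
    show "pairwise orthogonal B"
      unfolding B_def pairwise_def orthogonal_def using tangent_frameD[OF tf] by (auto simp: inner_commute)
    show "0 \<notin> B" unfolding B_def using xx tangent_frameD(2)[OF tf] by force
  qed
  ultimately have span_B: "UNIV \<subseteq> span B"
    using card_eq_dim[of B UNIV] unfolding B_def by simp
  define r where "r = v - (\<Sum>j\<in>?N. (v \<bullet> f j) *\<^sub>R f j)"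
  have "orthogonal r b" if "b \<in> B" for b
    using that inner_frame_sum_normal[OF tf, of ?N] inner_frame_sum[OF tf, of ?N] v
    unfolding B_def r_def orthogonal_def by (auto simp: inner_diff_left)
  then have "orthogonal r r" using span_B by (intro orthogonal_to_span[of r B r]) auto
  then show ?thesis unfolding r_def by (simp add: orthogonal_def)
qed

lemma exists_frame_span_orthogonal:
  assumes tfe: "tangent_frame (x::'a::euclidean_space) e" and tff: "tangent_frame x f"
    and I: "I \<subseteq> {1..DIM('a) - 1}" and J: "J \<subseteq> {1..DIM('a) - 1}" and card_JI: "card J < card I"
  shows "\<exists>v\<in>span (e ` I). v \<noteq> 0 \<and> (\<forall>j\<in>J. v \<bullet> f j = 0)"
proof (rule ccontr)
  define g where "g = (\<lambda>v. \<Sum>j\<in>J. (v \<bullet> f j) *\<^sub>R f j)"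
  have lin_g: "linear g"
    by (rule linearI) (simp_all add: g_def inner_add_left scaleR_add_left sum.distrib scaleR_sum_right)
  assume "\<not> ?thesis"
  then have zero: "v = 0" if "v \<in> span (e ` I)" "g v = 0" for v
    using that inner_frame_sum[OF tff J] unfolding g_def by (metis inner_zero_left)
  have "inj_on g (span (e ` I))"
  proof (rule inj_onI)
    fix v w assume "v \<in> span (e ` I)" "w \<in> span (e ` I)" "g v = g w"
    then have "v - w \<in> span (e ` I)" "g (v - w) = 0"
      using linear_diff[OF lin_g] span_diff by auto
    then show "v = w" using zero[of "v - w"] by simp
  qed
  then have "card I = dim (g ` e ` I)"
    using card_image[of e I] inj_on_subset[OF inj_on_tangent_frame[OF tfe] I]
      dim_eq_card_independent[OF independent_tangent_frame[OF tfe I]] dim_image_eq[OF lin_g]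
    by simp
  also have "\<dots> \<le> card (f ` J)"
  proof (rule dim_le_card)
    show "g ` e ` I \<subseteq> span (f ` J)"
      unfolding g_def by (auto, rule span_sum, rule span_scale, rule span_base, simp)
  qed (use finite_subset[OF J] in simp)
  also have "\<dots> \<le> card J" by (rule card_image_le[OF finite_subset[OF J]]) simp
  finally show False using card_JI by simp
qed

lemma form_ge_on_frame_span:
  fixes A :: "'a::euclidean_space \<Rightarrow> 'a \<Rightarrow> real"
  assumes tf: "tangent_frame x e" and A: "bilinear A" and I: "I \<subseteq> {1..DIM('a) - 1}"
    and dA: "\<And>i j. i \<in> {1..DIM('a) - 1} \<Longrightarrow> j \<in> {1..DIM('a) - 1} \<Longrightarrow>
      A (e i) (e j) = (if i = j then lam i else 0)"
    and t: "\<And>i. i \<in> I \<Longrightarrow> t \<le> lam i" and v: "v \<in> span (e ` I)"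
  shows "t * (v \<bullet> v) \<le> A v v"
proof -
  define a where "a = (\<lambda>i. v \<bullet> e i)"
  have va: "v = (\<Sum>i\<in>I. a i *\<^sub>R e i)" unfolding a_def by (rule span_frame_expansion[OF tf I v])
  have "t * (v \<bullet> v) = (\<Sum>i\<in>I. (a i)\<^sup>2 * t)"
    unfolding va inner_self_frame_sum[OF tf I] by (simp add: sum_distrib_left mult.commute)
  also have "\<dots> \<le> (\<Sum>i\<in>I. (a i)\<^sup>2 * lam i)"
    using t by (intro sum_mono mult_left_mono) auto
  also have "\<dots> = A v v" using bilinear_frame_sum[OF A I dA] va by metis
  finally show ?thesis .
qed

lemma form_less_off_frame_span:
  fixes B :: "'a::euclidean_space \<Rightarrow> 'a \<Rightarrow> real"
  assumes x: "norm x = 1" and tf: "tangent_frame x f" and B: "bilinear B"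
    and dB: "\<And>i j. i \<in> {1..DIM('a) - 1} \<Longrightarrow> j \<in> {1..DIM('a) - 1} \<Longrightarrow>
      B (f i) (f j) = (if i = j then mu i else 0)"
    and vx: "v \<bullet> x = 0" and v0: "v \<noteq> 0"
    and t: "\<And>j. j \<in> {1..DIM('a) - 1} \<Longrightarrow> t \<le> mu j \<Longrightarrow> v \<bullet> f j = 0"
  shows "B v v < t * (v \<bullet> v)"
proof -
  let ?N = "{1..DIM('a) - 1}"
  define c where "c = (\<lambda>j. v \<bullet> f j)"
  have vc: "v = (\<Sum>j\<in>?N. c j *\<^sub>R f j)" unfolding c_def by (rule tangent_frame_expansion[OF x tf vx])
  have "\<exists>j\<in>?N. c j \<noteq> 0"
  proof (rule ccontr)
    assume "\<not> ?thesis"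
    then have "v = 0" using vc by simp
    then show False using v0 by simp
  qed
  then obtain j0 where j0: "j0 \<in> ?N" "c j0 \<noteq> 0" by blast
  have "0 < (\<Sum>j\<in>?N. (c j)\<^sup>2 * (t - mu j))"
  proof (rule sum_pos2[OF _ j0(1)])
    have "mu j0 < t" using t[OF j0(1)] j0(2) unfolding c_def by force
    then show "0 < (c j0)\<^sup>2 * (t - mu j0)" using j0(2) by simp
    show "0 \<le> (c j)\<^sup>2 * (t - mu j)" if "j \<in> ?N" for j
      using t[OF that] unfolding c_def by (cases "t \<le> mu j") auto
  qed simp
  then show ?thesis
    using bilinear_frame_sum[OF B _ dB, of ?N c] inner_self_frame_sum[OF tf, of ?N c] vc
    by (simp add: sum_subtractf sum_distrib_left algebra_simps)
qed

text \<open>Min-max: for every level \<open>t\<close>, the form \<open>B\<close> has at least as many eigenvalues \<open>\<ge> t\<close> as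
  \<open>A \<le> B\<close>, because a vector in the span of the large eigenvectors of \<open>A\<close> that is orthogonal
  to those of \<open>B\<close> would give \<open>t |v|\<^sup>2 \<le> A v v \<le> B v v < t |v|\<^sup>2\<close>.\<close>

lemma card_eigenvalues_ge_le:
  fixes A B :: "'a::euclidean_space \<Rightarrow> 'a \<Rightarrow> real"
  assumes x: "norm x = 1" and tfe: "tangent_frame x e" and tff: "tangent_frame x f"
    and A: "bilinear A" and B: "bilinear B"
    and dA: "\<And>i j. i \<in> {1..DIM('a) - 1} \<Longrightarrow> j \<in> {1..DIM('a) - 1} \<Longrightarrow>
      A (e i) (e j) = (if i = j then lam i else 0)"
    and dB: "\<And>i j. i \<in> {1..DIM('a) - 1} \<Longrightarrow> j \<in> {1..DIM('a) - 1} \<Longrightarrow>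
      B (f i) (f j) = (if i = j then mu i else 0)"
    and le: "\<And>v. v \<bullet> x = 0 \<Longrightarrow> A v v \<le> B v v"
  shows "card {i\<in>{1..DIM('a) - 1}. t \<le> lam i} \<le> card {j\<in>{1..DIM('a) - 1}. t \<le> mu j}"
proof (rule ccontr)
  let ?N = "{1..DIM('a) - 1}"
  define I where "I = {i\<in>?N. t \<le> lam i}"
  define J where "J = {j\<in>?N. t \<le> mu j}"
  have IN: "I \<subseteq> ?N" and JN: "J \<subseteq> ?N" unfolding I_def J_def by auto
  assume "\<not> ?thesis"
  then obtain v where v: "v \<in> span (e ` I)" "v \<noteq> 0" and vJ: "\<And>j. j \<in> J \<Longrightarrow> v \<bullet> f j = 0"
    using exists_frame_span_orthogonal[OF tfe tff IN JN] unfolding I_def J_def by auto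
  have vx: "v \<bullet> x = 0"
    using inner_frame_sum_normal[OF tfe IN] span_frame_expansion[OF tfe IN v(1)] by metis
  have "t * (v \<bullet> v) \<le> A v v"
    using form_ge_on_frame_span[OF tfe A IN dA _ v(1)] unfolding I_def by blast
  moreover have "B v v < t * (v \<bullet> v)"
    using form_less_off_frame_span[OF x tff B dB vx v(2)] vJ unfolding J_def by blast
  ultimately show False using le[OF vx] by simp
qed

text \<open>The bijection is built greedily, pairing the largest value of \<open>lam\<close> with the largest
  value of \<open>mu\<close>.\<close>

lemma exists_bij_dominating:
  fixes lam mu :: "'i \<Rightarrow> real"
  shows "finite S \<Longrightarrow> finite T \<Longrightarrow> card S = n \<Longrightarrow> card T = n \<Longrightarrow>
   (\<forall>t. card {i\<in>S. t \<le> lam i} \<le> card {j\<in>T. t \<le> mu j}) \<Longrightarrow>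
   \<exists>p. bij_betw p S T \<and> (\<forall>i\<in>S. lam i \<le> mu (p i))"
proof (induction n arbitrary: S T)
  case 0
  then show ?case by (auto simp: bij_betw_def)
next
  case (Suc n)
  note finS = Suc.prems(1) and finT = Suc.prems(2) and cnt = Suc.prems(5)
  have "S \<noteq> {}" "T \<noteq> {}" using Suc.prems by auto
  then have "Max (lam ` S) \<in> lam ` S" "Max (mu ` T) \<in> mu ` T"
    using finS finT by (auto intro: Max_in)
  then obtain i l where iS: "i \<in> S" and i: "lam i = Max (lam ` S)"
    and lT: "l \<in> T" and l: "mu l = Max (mu ` T)" by auto
  have imax: "\<forall>j\<in>S. lam j \<le> lam i" and lmax: "\<forall>j\<in>T. mu j \<le> mu l"
    unfolding i l using finS finT by simp_all
  have "0 < card {j\<in>S. lam i \<le> lam j}" using iS finS by (auto simp: card_gt_0_iff)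
  also have "\<dots> \<le> card {j\<in>T. lam i \<le> mu j}" using cnt by blast
  finally obtain l' where "l' \<in> T" "lam i \<le> mu l'" by (metis (no_types, lifting) Collect_empty_eq card.empty less_irrefl)
  then have il: "lam i \<le> mu l" using lmax by force
  let ?S = "S - {i}" and ?T = "T - {l}"
  have "card {j\<in>?S. t \<le> lam j} \<le> card {j\<in>?T. t \<le> mu j}" for t
  proof (cases "t \<le> lam i")
    case True
    have "{j\<in>?S. t \<le> lam j} = {j\<in>S. t \<le> lam j} - {i}" "{j\<in>?T. t \<le> mu j} = {j\<in>T. t \<le> mu j} - {l}"
      by auto
    then show ?thesis using cnt[rule_format, of t] finS finT iS lT True il
      by (simp add: card_Diff_singleton)
  next
    case False
    then have empty: "{j\<in>?S. t \<le> lam j} = {}" using imax by force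
    show ?thesis unfolding empty by simp
  qed
  then obtain p where p: "bij_betw p ?S ?T" "\<forall>j\<in>?S. lam j \<le> mu (p j)"
    using Suc.IH[of ?S ?T] finS finT Suc.prems(3,4) iS lT by auto
  define q where "q = p(i := l)"
  have "bij_betw q ?S ?T" using p(1) unfolding q_def by (rule bij_betw_cong[THEN iffD1, rotated]) auto
  then have "bij_betw q (insert i ?S) (insert l ?T)"
    unfolding bij_betw_def q_def by (auto simp: inj_on_def)
  moreover have "insert i ?S = S" "insert l ?T = T" using iS lT by auto
  moreover have "\<forall>j\<in>S. lam j \<le> mu (q j)" using p(2) il unfolding q_def by auto
  ultimately show ?case by auto
qed

lemma esym_le_if_form_le:
  fixes A B :: "'a::euclidean_space \<Rightarrow> 'a \<Rightarrow> real"
  assumes "norm x = 1" "tangent_frame x e" "tangent_frame x f" "bilinear A" "bilinear B"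
    and "\<And>i j. i \<in> {1..DIM('a) - 1} \<Longrightarrow> j \<in> {1..DIM('a) - 1} \<Longrightarrow>
      A (e i) (e j) = (if i = j then lam i else 0)"
    and "\<And>i j. i \<in> {1..DIM('a) - 1} \<Longrightarrow> j \<in> {1..DIM('a) - 1} \<Longrightarrow>
      B (f i) (f j) = (if i = j then mu i else 0)"
    and "\<And>v. v \<bullet> x = 0 \<Longrightarrow> A v v \<le> B v v"
    and G: "garding_cone {1..DIM('a) - 1} k lam" and k: "1 \<le> k"
  shows "esym {1..DIM('a) - 1} k lam \<le> esym {1..DIM('a) - 1} k mu"
proof -
  let ?N = "{1..DIM('a) - 1}"
  obtain p where p: "bij_betw p ?N ?N" "\<forall>i\<in>?N. lam i \<le> mu (p i)"
    using exists_bij_dominating[of ?N ?N "card ?N" lam mu] card_eigenvalues_ge_le[OF assms(1-8)]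
    by auto
  have "esym ?N k lam \<le> esym ?N k (\<lambda>i. mu (p i))"
    using esym_mono_garding_cone[OF _ G _ k] p(2) by simp
  also have "\<dots> = esym ?N k mu" using esym_reindex[OF p(1)] by simp
  finally show ?thesis .
qed

section \<open>Second-order conditions at an interior maximum\<close>

lemma increase_right_of_critical_point:
  fixes psi phi :: "real \<Rightarrow> real"
  assumes d: "d > 0" and dpsi: "\<And>t. \<bar>t\<bar> < d \<Longrightarrow> (psi has_real_derivative phi t) (at t)"
    and phi0: "phi 0 = 0" and dphi: "(phi has_real_derivative c) (at 0)" and c: "c > 0"
  obtains h where "0 < h" "h < d" "psi 0 < psi h"
proof -
  obtain e where e: "e > 0" "\<And>h. h > 0 \<Longrightarrow> h < e \<Longrightarrow> phi 0 < phi (0 + h)"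
    using DERIV_pos_inc_right[OF dphi c] by blast
  define h where "h = min e d / 2"
  have h: "h > 0" "h < e" "h < d" unfolding h_def using e(1) d by auto
  obtain z where z: "0 < z" "z < h" "psi h - psi 0 = (h - 0) * phi z"
    using MVT2[OF h(1), of psi phi] dpsi h by force
  have "phi z > 0" using e(2)[of z] z h phi0 by simp
  then have "psi 0 < psi h" using z h by (simp add: algebra_simps)
  with h that show ?thesis by blast
qed

lemma second_derivative_nonpos_at_max:
  fixes g :: "'a::euclidean_space \<Rightarrow> real"
  assumes S: "open S" and x0: "x0 \<in> S" and max: "\<forall>y\<in>S. g y \<le> g x0"
    and der: "\<And>y. y \<in> S \<Longrightarrow> (g has_derivative G y) (at y)"
    and der2: "((\<lambda>y. G y v) has_derivative H) (at x0)"
  shows "H v \<le> 0"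
proof (rule ccontr)
  assume "\<not> ?thesis"
  then have H_pos: "H v > 0" by simp
  have line: "((\<lambda>t::real. x0 + t *\<^sub>R v) has_derivative (\<lambda>s. s *\<^sub>R v)) (at t)" for t
    by (auto intro!: derivative_eq_intros)
  obtain r where r: "r > 0" "ball x0 r \<subseteq> S" using S x0 open_contains_ball_eq by blast
  have nv: "norm v + 1 > 0" using norm_ge_zero[of v] by linarith
  define d where "d = r / (norm v + 1)"
  have d: "d > 0" unfolding d_def using r nv by simp
  have in_S: "x0 + t *\<^sub>R v \<in> S" if "\<bar>t\<bar> < d" for t
  proof -
    have "norm (t *\<^sub>R v) \<le> \<bar>t\<bar> * (norm v + 1)" by (simp add: mult_left_mono)
    also have "\<dots> < d * (norm v + 1)"
      using that nv by (intro mult_strict_right_mono) auto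
    also have "\<dots> = r" unfolding d_def using nv by simp
    finally show ?thesis using r by (auto simp: dist_norm)
  qed
  define phi where "phi = (\<lambda>t::real. G (x0 + t *\<^sub>R v) v)"
  define psi where "psi = (\<lambda>t::real. g (x0 + t *\<^sub>R v))"
  have dpsi: "(psi has_real_derivative phi t) (at t)" if "\<bar>t\<bar> < d" for t
  proof -
    have gd: "(g has_derivative G (x0 + t *\<^sub>R v)) (at (x0 + t *\<^sub>R v))" using der in_S that by blast
    have "(psi has_derivative (\<lambda>s. G (x0 + t *\<^sub>R v) (s *\<^sub>R v))) (at t)"
      unfolding psi_def using has_derivative_compose[OF line gd] .
    moreover have "(\<lambda>s. G (x0 + t *\<^sub>R v) (s *\<^sub>R v)) = (\<lambda>s. phi t * s)"
      unfolding phi_def using linear_scale[OF has_derivative_linear[OF gd]] by (auto simp: mult.commute)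
    ultimately show ?thesis by (simp add: has_field_derivative_def)
  qed
  have dphi: "(phi has_real_derivative H v) (at 0)"
  proof -
    have "((\<lambda>y. G y v) has_derivative H) (at (x0 + 0 *\<^sub>R v))" using der2 by simp
    from has_derivative_compose[OF line this]
    have "(phi has_derivative (\<lambda>s. H (s *\<^sub>R v))) (at 0)" unfolding phi_def .
    moreover have "(\<lambda>s. H (s *\<^sub>R v)) = (\<lambda>s. H v * s)"
      using linear_scale[OF has_derivative_linear[OF der2]] by (auto simp: mult.commute)
    ultimately show ?thesis by (simp add: has_field_derivative_def)
  qed
  have "phi 0 = 0"
    using differential_zero_maxmin[OF x0 S der[OF x0]] max unfolding phi_def by auto
  then obtain h where "0 < h" "h < d" "psi 0 < psi h"
    using increase_right_of_critical_point[OF d dpsi _ dphi H_pos] by blast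
  then show False using max in_S[of h] unfolding psi_def by force
qed

lemma open_punctured: "open (punctured :: 'a::euclidean_space set)"
  unfolding punctured_def by (simp add: open_Compl)

lemma sphere_subset_punctured: "sphere (0::'a::euclidean_space) 1 \<subseteq> punctured"
  by (auto simp: punctured_def)

lemma hom0_on_sphere: "x \<in> sphere (0::'a::euclidean_space) 1 \<Longrightarrow> hom0 u x = u x"
  by (simp add: hom0_def)

lemma Ck_on_2_derivatives:
  fixes F :: "'a::euclidean_space \<Rightarrow> real"
  assumes "Ck_on 2 punctured F"
  shows "continuous_on punctured F"
    and "\<And>y. y \<in> punctured \<Longrightarrow> (F has_derivative frechet_derivative F (at y)) (at y)"
    and "\<And>y v. y \<in> punctured \<Longrightarrow> ((\<lambda>z. frechet_derivative F (at z) v) has_derivative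
            frechet_derivative (\<lambda>z. frechet_derivative F (at z) v) (at y)) (at y)"
  using assms differentiable_on_eq_differentiable_at[OF open_punctured] frechet_derivative_works
  by (auto simp: numeral_2_eq_2)

lemma bilinear_sph_hess:
  fixes u :: "'a::euclidean_space \<Rightarrow> real"
  assumes C: "Ck_on 2 punctured (hom0 u)" and x: "x \<in> punctured"
  shows "bilinear (sph_hess u x)"
proof -
  let ?D = "\<lambda>z. frechet_derivative (hom0 u) (at z)"
  let ?H = "\<lambda>v. frechet_derivative (\<lambda>z. ?D z v) (at x)"
  have lin_D: "linear (?D z)" if "z \<in> punctured" for z
    using has_derivative_linear[OF Ck_on_2_derivatives(2)[OF C that]] .
  have der_H: "((\<lambda>z. ?D z v) has_derivative ?H v) (at x)" for v
    using Ck_on_2_derivatives(3)[OF C x] .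
  have comb: "?H (a *\<^sub>R v1 + b *\<^sub>R v2) = (\<lambda>w. a * ?H v1 w + b * ?H v2 w)" for a b v1 v2
  proof -
    have "((\<lambda>z. a * ?D z v1 + b * ?D z v2) has_derivative (\<lambda>w. a * ?H v1 w + b * ?H v2 w)) (at x)"
      by (intro has_derivative_add has_derivative_mult_right der_H)
    then have "((\<lambda>z. ?D z (a *\<^sub>R v1 + b *\<^sub>R v2)) has_derivative (\<lambda>w. a * ?H v1 w + b * ?H v2 w)) (at x)"
      by (rule has_derivative_transform_within_open[OF _ open_punctured x])
        (simp add: linear_add[OF lin_D] linear_scale[OF lin_D])
    then show ?thesis by (rule frechet_derivative_at[symmetric])
  qed
  have "linear (\<lambda>v. sph_hess u x v w)" for w
    by (rule linearI) (use comb[of 1 _ 1] comb[of _ _ 0 0] in \<open>simp_all add: sph_hess_def\<close>)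
  moreover have "linear (sph_hess u x v)" for v
    unfolding sph_hess_def[abs_def] using der_H by (rule has_derivative_linear)
  ultimately show ?thesis unfolding bilinear_def by blast
qed

lemma bilinear_shifted_hess:
  fixes u :: "'a::euclidean_space \<Rightarrow> real"
  assumes "Ck_on 2 punctured (hom0 u)" "x \<in> punctured"
  shows "bilinear (\<lambda>v w. M * (sph_hess u x v w + a * (v \<bullet> w)))"
proof -
  have h: "bilinear (sph_hess u x)" by (rule bilinear_sph_hess[OF assms])
  show ?thesis
    unfolding bilinear_def
    by (intro allI conjI linearI)
      (simp_all add: bilinear_ladd[OF h] bilinear_radd[OF h] bilinear_lmul[OF h] bilinear_rmul[OF h]
        inner_add_left inner_add_right algebra_simps)
qed

text \<open>If \<open>u \<le> M w\<close> on the sphere with equality at \<open>x\<^sub>0\<close>, then \<open>hom0 u - M hom0 w\<close> has a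
  maximum at \<open>x\<^sub>0\<close> on the whole punctured space, by zero-homogeneity.\<close>

lemma derivatives_at_contact:
  fixes u w :: "'a::euclidean_space \<Rightarrow> real"
  assumes Cu: "Ck_on 2 punctured (hom0 u)" and Cw: "Ck_on 2 punctured (hom0 w)"
    and x0: "x0 \<in> sphere 0 1" and le: "\<And>y. y \<in> sphere 0 1 \<Longrightarrow> u y \<le> M * w y"
    and eq: "u x0 = M * w x0"
  shows "frechet_derivative (hom0 u) (at x0) v = M * frechet_derivative (hom0 w) (at x0) v"
    and "sph_hess u x0 v v \<le> M * sph_hess w x0 v v"
proof -
  have x0p: "x0 \<in> punctured" using x0 sphere_subset_punctured by blast
  define Du where "Du = (\<lambda>y. frechet_derivative (hom0 u) (at y))"
  define Dw where "Dw = (\<lambda>y. frechet_derivative (hom0 w) (at y))"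
  define g where "g = (\<lambda>y. hom0 u y - M * hom0 w y)"
  define G where "G = (\<lambda>y v. Du y v - M * Dw y v)"
  have max: "\<forall>y\<in>punctured. g y \<le> g x0"
  proof
    fix y :: 'a assume "y \<in> punctured"
    then have "y /\<^sub>R norm y \<in> sphere 0 1" by (auto simp: punctured_def)
    then have "u (y /\<^sub>R norm y) \<le> M * w (y /\<^sub>R norm y)" by (rule le)
    moreover have "x0 /\<^sub>R norm x0 = x0" using x0 by simp
    ultimately show "g y \<le> g x0" using eq unfolding g_def hom0_def by simp
  qed
  have der: "(g has_derivative G y) (at y)" if "y \<in> punctured" for y
    unfolding g_def G_def Du_def Dw_def
    by (intro has_derivative_diff has_derivative_mult_right Ck_on_2_derivatives(2)[OF Cu that]
        Ck_on_2_derivatives(2)[OF Cw that])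
  have "G x0 = (\<lambda>v. 0)"
    using differential_zero_maxmin[OF x0p open_punctured der[OF x0p]] max by blast
  then show "frechet_derivative (hom0 u) (at x0) v = M * frechet_derivative (hom0 w) (at x0) v"
    unfolding G_def Du_def Dw_def by (metis eq_iff_diff_eq_0)
  have "((\<lambda>y. G y v) has_derivative (\<lambda>z. sph_hess u x0 v z - M * sph_hess w x0 v z)) (at x0)"
    unfolding G_def Du_def Dw_def sph_hess_def
    by (intro has_derivative_diff has_derivative_mult_right Ck_on_2_derivatives(3)[OF Cu x0p]
        Ck_on_2_derivatives(3)[OF Cw x0p])
  from second_derivative_nonpos_at_max[OF open_punctured x0p max der this]
  show "sph_hess u x0 v v \<le> M * sph_hess w x0 v v" by simp
qed

section \<open>Uniqueness\<close>

lemma pos_adm_solution_continuous: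
  assumes "pos_adm_solution k p q phi u"
  shows "continuous_on (sphere 0 1) u"
proof -
  have "continuous_on (sphere 0 1) (hom0 u)"
    using Ck_on_2_derivatives(1) assms sphere_subset_punctured unfolding pos_adm_solution_def
    by (blast intro: continuous_on_subset)
  then show ?thesis by (rule continuous_on_cong[THEN iffD1, OF refl, rotated]) (simp add: hom0_on_sphere)
qed

lemma powr_scale_rhs:
  fixes M a X p r :: real
  assumes "M > 0" "a > 0" "X > 0"
  shows "(M * a) powr (p - 1) * (M\<^sup>2 * X) powr r = M powr (p - 1 + 2 * r) * (a powr (p - 1) * X powr r)"
proof -
  have "M\<^sup>2 = M powr 2" using powr_realpow[OF assms(1), of 2] by simp
  then have "(M\<^sup>2) powr r = M powr (2 * r)" by (simp add: powr_powr)
  then show ?thesis using assms by (simp add: powr_mult powr_add)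
qed

lemma sigma_le_at_contact:
  fixes u w :: "'a::euclidean_space \<Rightarrow> real"
  assumes Cu: "Ck_on 2 punctured (hom0 u)" and Cw: "Ck_on 2 punctured (hom0 w)"
    and x0: "x0 \<in> sphere 0 1" and le: "\<And>y. y \<in> sphere 0 1 \<Longrightarrow> u y \<le> M * w y"
    and eq: "u x0 = M * w x0"
    and lam: "sph_eigs u x0 lam" and mu: "sph_eigs w x0 mu"
    and G: "in_Gamma (DIM('a) - 1) k lam" and k: "1 \<le> k"
  shows "sigma (DIM('a) - 1) k lam \<le> M ^ k * sigma (DIM('a) - 1) k mu"
proof -
  let ?N = "{1..DIM('a) - 1}"
  have x0p: "x0 \<in> punctured" using x0 sphere_subset_punctured by blast
  obtain e where e: "tangent_frame x0 e" and de: "\<And>i j. i \<in> ?N \<Longrightarrow> j \<in> ?N \<Longrightarrow>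
      sph_hess u x0 (e i) (e j) + (if i = j then u x0 else 0) = (if i = j then lam i else 0)"
    using lam unfolding sph_eigs_def by blast
  obtain f where f: "tangent_frame x0 f" and df: "\<And>i j. i \<in> ?N \<Longrightarrow> j \<in> ?N \<Longrightarrow>
      sph_hess w x0 (f i) (f j) + (if i = j then w x0 else 0) = (if i = j then mu i else 0)"
    using mu unfolding sph_eigs_def by blast
  define A where "A = (\<lambda>v z. 1 * (sph_hess u x0 v z + u x0 * (v \<bullet> z)))"
  define B where "B = (\<lambda>v z. M * (sph_hess w x0 v z + w x0 * (v \<bullet> z)))"
  have "esym ?N k lam \<le> esym ?N k (\<lambda>i. M * mu i)"
  proof (rule esym_le_if_form_le)
    show "bilinear A" "bilinear B"
      unfolding A_def B_def using bilinear_shifted_hess Cu Cw x0p by blast+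
    show "A (e i) (e j) = (if i = j then lam i else 0)" if "i \<in> ?N" "j \<in> ?N" for i j
      using de[OF that] tangent_frameD(2)[OF e that] unfolding A_def by (auto split: if_splits)
    show "B (f i) (f j) = (if i = j then M * mu i else 0)" if "i \<in> ?N" "j \<in> ?N" for i j
      using df[OF that] tangent_frameD(2)[OF f that] unfolding B_def by (auto split: if_splits)
    show "A v v \<le> B v v" for v
      using derivatives_at_contact(2)[OF Cu Cw x0 le eq, of v] eq
      unfolding A_def B_def by (simp add: algebra_simps)
  qed (use x0 e f G k in \<open>simp_all add: in_Gamma_iff_garding_cone\<close>)
  then show ?thesis by (simp add: sigma_eq_esym esym_cmult)
qed

lemma max_ratio_le_1:
  fixes u w :: "'a::euclidean_space \<Rightarrow> real"
  assumes k: "1 \<le> k" and pq: "p > q"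
    and su: "pos_adm_solution k p q phi u" and sw: "pos_adm_solution k p q phi w"
    and x0: "x0 \<in> sphere 0 1" and le: "\<And>y. y \<in> sphere 0 1 \<Longrightarrow> u y \<le> M * w y"
    and eq: "u x0 = M * w x0"
  shows "M \<le> 1"
proof (rule ccontr)
  let ?n = "DIM('a) - 1" and ?r = "(real k + 1 - q) / 2"
  assume "\<not> M \<le> 1"
  then have M1: "M > 1" by simp
  have Cu: "Ck_on 2 punctured (hom0 u)" and Cw: "Ck_on 2 punctured (hom0 w)" and w0: "w x0 > 0"
    using su sw x0 unfolding pos_adm_solution_def by auto
  obtain lam where lam: "sph_eigs u x0 lam" "in_Gamma ?n k lam"
    and lam_eq: "sigma ?n k lam = u x0 powr (p - 1) * (u x0 ^ 2 + sph_grad_sq u x0) powr ?r * phi x0"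
    using su x0 unfolding pos_adm_solution_def by blast
  obtain mu where mu: "sph_eigs w x0 mu" "in_Gamma ?n k mu"
    and mu_eq: "sigma ?n k mu = w x0 powr (p - 1) * (w x0 ^ 2 + sph_grad_sq w x0) powr ?r * phi x0"
    using sw x0 unfolding pos_adm_solution_def by blast
  have grad_u: "sph_grad_sq u x0 = M\<^sup>2 * sph_grad_sq w x0"
    unfolding sph_grad_sq_def using derivatives_at_contact(1)[OF Cu Cw x0 le eq]
    by (simp add: sum_distrib_left power_mult_distrib)
  define X where "X = w x0 ^ 2 + sph_grad_sq w x0"
  have grad: "(M * w x0) ^ 2 + sph_grad_sq u x0 = M\<^sup>2 * X"
    unfolding X_def grad_u by (simp add: algebra_simps power_mult_distrib)
  have X: "X > 0"
    using w0 unfolding X_def sph_grad_sq_def by (intro add_pos_nonneg) (auto intro: sum_nonneg)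
  have "sigma ?n k lam = ((M * w x0) powr (p - 1) * (M\<^sup>2 * X) powr ?r) * phi x0"
    using lam_eq by (simp only: eq grad)
  also have "\<dots> = M powr (p - 1 + 2 * ?r) * sigma ?n k mu"
    using powr_scale_rhs[OF _ w0 X, of M] M1 unfolding mu_eq X_def by (simp add: mult_ac)
  also have "p - 1 + 2 * ?r = real k + (p - q)" by (simp add: field_simps)
  finally have sigma_eq: "sigma ?n k lam = M powr (real k + (p - q)) * sigma ?n k mu" .
  have "M ^ k * sigma ?n k mu < M powr (real k + (p - q)) * sigma ?n k mu"
  proof -
    have "M ^ k = M powr real k" using M1 by (simp add: powr_realpow)
    also have "\<dots> < M powr (real k + (p - q))" using M1 pq by (intro powr_less_mono) auto
    finally show ?thesis using mu(2) k unfolding in_Gamma_def by simp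
  qed
  then show False
    using sigma_le_at_contact[OF Cu Cw x0 le eq lam(1) mu(1) lam(2) k] sigma_eq by simp
qed

lemma pos_adm_solution_le:
  fixes u w :: "'a::euclidean_space \<Rightarrow> real"
  assumes k: "1 \<le> k" and pq: "p > q"
    and su: "pos_adm_solution k p q phi u" and sw: "pos_adm_solution k p q phi w"
  shows "\<forall>x\<in>sphere 0 1. u x \<le> w x"
proof
  have w_pos: "w y > 0" if "y \<in> sphere 0 1" for y
    using sw that unfolding pos_adm_solution_def by blast
  have "continuous_on (sphere 0 1) (\<lambda>x. u x / w x)"
    using pos_adm_solution_continuous[OF su] pos_adm_solution_continuous[OF sw] w_pos
    by (intro continuous_on_divide) (auto simp: less_imp_neq[symmetric])
  moreover obtain b :: 'a where "b \<in> Basis" using nonempty_Basis by blast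
  then have "sphere (0::'a) 1 \<noteq> {}" by (metis empty_iff mem_sphere_0 norm_Basis)
  ultimately obtain x0 where x0: "x0 \<in> sphere 0 1"
    and max: "\<forall>y\<in>sphere 0 1. u y / w y \<le> u x0 / w x0"
    using continuous_attains_sup[OF compact_sphere] by blast
  define M where "M = u x0 / w x0"
  have le: "u y \<le> M * w y" if "y \<in> sphere 0 1" for y
  proof -
    have "u y / w y \<le> M" using max that unfolding M_def by blast
    then show ?thesis using w_pos[OF that] by (simp add: divide_le_eq)
  qed
  have "u x0 = M * w x0" using w_pos[OF x0] unfolding M_def by simp
  then have "M \<le> 1" using max_ratio_le_1[OF k pq su sw x0 le] by blast
  fix y :: 'a assume y: "y \<in> sphere 0 1"
  show "u y \<le> w y"
    using le[OF y] mult_right_mono[OF \<open>M \<le> 1\<close> less_imp_le[OF w_pos[OF y]]] by simp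
qed

theorem mainTheorem7:
  fixes phi u ubar :: "'a::euclidean_space \<Rightarrow> real" and k :: nat and p q :: real
  assumes "1 \<le> k" and "k \<le> DIM('a) - 1" and "p > q"
    and "smooth_on punctured (hom0 phi)" and "\<forall>x\<in>sphere 0 1. phi x > 0"
    and "pos_adm_solution k p q phi u" and "pos_adm_solution k p q phi ubar"
  shows "\<forall>x\<in>sphere 0 1. u x = ubar x"
  using pos_adm_solution_le[OF assms(1,3,6,7)] pos_adm_solution_le[OF assms(1,3,7,6)]
  by (auto intro: order_antisym)

end
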